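(* Let $V$ be a finite vertex set with $|V| = n$ and let $\{k_u\}_{u\in V}$ be a degree sequence with $k_u \ge 1$ for all $u$, such that there are at least two distinct multiloop-graphs on $V$ with degree sequence $\{k_u\}$. Then the graph of multiloop-graphs $\mathcal{G}_{ll}(\{k_u\})$ is connected if and only if both of the following hold: (1) there exists a vertex $u$ with $k_u$ odd; and (2) there exists a vertex $v$ such that $k_v-(n-1)$ is negative or odd.
   Context: All graphs are on a fixed labeled vertex set $V$; a graph is a multiset $E$ of unordered pairs $(u,v)$ with $u,v\in V$, where a pair $(u,u)$ is a self-loop and an edge occurring more than once is a multiedge (or multiple self-loop, if it is a loop). The degree $k_u$ of $u$ is the number of edge-endpoints at $u$, so each self-loop at $u$ contributes $2$ to $k_u$. A multiloop-graph is such a graph in which self-loops may occur with any multiplicity but every non-loop edge $(u,v)$, $u\ne v$, occurs at most once. A double edge swap $(u,v),(x,y)\leadsto(u,x),(v,y)$ on a graph removes one copy of each of two edge occurrences $(u,v)$ and $(x,y)$ (loops allowed, i.e. possibly $u=v$ or $x=y$) and adds the edges $(u,x)$ and $(v,y)$; since edges are unordered, either pairing of endpoints may be used. It preserves the degree sequence. The graph of multiloop-graphs $\mathcal{G}_{ll}(\{k_u\})$ has as vertices all multiloop-graphs on $V$ with degree sequence $\{k_u\}$, with two distinct such graphs adjacent if one is obtained from the other by a single double edge swap (so every intermediate graph along a path must itself be a multiloop-graph). *)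

theory Defs
  imports Main "HOL-Library.Multiset"
begin

text \<open>An edge is an unordered pair, represented as a multiset of size 2:
  the edge (u,v) is {#u, v#}; a self-loop at u is {#u, u#}.
  A graph is a multiset of edges.\<close>

definition edge :: "'a \<Rightarrow> 'a \<Rightarrow> 'a multiset" where
  "edge u v = {#u, v#}"

definition is_graph_on :: "'a set \<Rightarrow> 'a multiset multiset \<Rightarrow> bool" where
  "is_graph_on V E \<longleftrightarrow> (\<forall>e \<in># E. \<exists>u v. u \<in> V \<and> v \<in> V \<and> e = edge u v)"

text \<open>Degree: number of edge-endpoints at u (a loop contributes 2).\<close>
definition degree :: "'a multiset multiset \<Rightarrow> 'a \<Rightarrow> nat" where
  "degree E u = (\<Sum>e \<in># E. count e u)"

definition multiloop_graph :: "'a set \<Rightarrow> 'a multiset multiset \<Rightarrow> bool" where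
  "multiloop_graph V E \<longleftrightarrow> is_graph_on V E \<and>
     (\<forall>u v. u \<noteq> v \<longrightarrow> count E (edge u v) \<le> 1)"

definition multiloop_graphs :: "'a set \<Rightarrow> ('a \<Rightarrow> nat) \<Rightarrow> 'a multiset multiset set" where
  "multiloop_graphs V k = {E. multiloop_graph V E \<and> (\<forall>u \<in> V. degree E u = k u)}"

definition double_edge_swap :: "'a multiset multiset \<Rightarrow> 'a multiset multiset \<Rightarrow> bool" where
  "double_edge_swap E E' \<longleftrightarrow> (\<exists>u v x y.
     {#edge u v, edge x y#} \<subseteq># E \<and>
     E' = E - {#edge u v, edge x y#} + {#edge u x, edge v y#})"

definition Gll_adj :: "'a set \<Rightarrow> ('a \<Rightarrow> nat) \<Rightarrow> 'a multiset multiset \<Rightarrow> 'a multiset multiset \<Rightarrow> bool" where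
  "Gll_adj V k E E' \<longleftrightarrow> E \<in> multiloop_graphs V k \<and> E' \<in> multiloop_graphs V k \<and>
     E \<noteq> E' \<and> (double_edge_swap E E' \<or> double_edge_swap E' E)"

definition Gll_connected :: "'a set \<Rightarrow> ('a \<Rightarrow> nat) \<Rightarrow> bool" where
  "Gll_connected V k \<longleftrightarrow> (\<forall>E \<in> multiloop_graphs V k. \<forall>E' \<in> multiloop_graphs V k.
     (Gll_adj V k)\<^sup>*\<^sup>* E E')"

end

theory Submission
  imports Defs
begin

text \<open>
  If all degrees are even, the graph made only of loops is isolated in G_ll: swapping two loops
  either changes nothing or creates a double edge.  If every k_v - (n - 1) is even and
  nonnegative, the complete graph with loops added is isolated: every non-loop edge a swap could
  create is already present.  With two graphs available, G_ll is then disconnected.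

  Conversely, call a graph a matching if every vertex has at most one non-loop neighbour.
  Any graph can be swapped down to a matching by decreasing the number of non-loop edges:
  a path a - x - b with a, b not adjacent is cut in one swap; otherwise the non-loop edges form
  disjoint cliques, and either an edge outside the clique of a vertex with two neighbours helps,
  or (the graph not being complete) some vertex is isolated, carries a loop, and an odd degree
  makes that clique big enough for a three-swap detour through the loop.  In a matching the
  matched vertices are exactly those of odd degree, so two matchings are joined by swaps that
  align their pairs one at a time.
\<close>

lemma edge_commute: "edge a b = edge b a"
  by (simp add: edge_def add_mset_commute)

lemma edge_eq_iff: "edge a b = edge c d \<longleftrightarrow> (a = c \<and> b = d) \<or> (a = d \<and> b = c)"
  unfolding edge_def by (auto simp: add_eq_conv_ex)

lemma count_edge: "count (edge a b) v = (if a = v then 1 else 0) + (if b = v then 1 else 0)"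
  by (simp add: edge_def)

lemma degree_union: "degree (A + B) u = degree A u + degree B u"
  by (simp add: degree_def)

lemma is_graph_on_edgeD:
  assumes "is_graph_on V E" "edge u v \<in># E" shows "u \<in> V" "v \<in> V"
proof -
  obtain p q where "p \<in> V" "q \<in> V" "edge u v = edge p q"
    using assms unfolding is_graph_on_def by blast
  then show "u \<in> V" "v \<in> V" by (auto simp: edge_eq_iff)
qed

lemma multiloop_graphsD:
  assumes "E \<in> multiloop_graphs V k"
  shows "multiloop_graph V E" "is_graph_on V E" "\<And>u. u \<in> V \<Longrightarrow> degree E u = k u"
  using assms unfolding multiloop_graphs_def multiloop_graph_def by auto

lemma double_edge_swap_sym:
  assumes "double_edge_swap E E'" shows "double_edge_swap E' E"
proof -
  obtain u v x y where sub: "{#edge u v, edge x y#} \<subseteq># E"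
    and E': "E' = E - {#edge u v, edge x y#} + {#edge u x, edge v y#}"
    using assms unfolding double_edge_swap_def by blast
  have "E = E' - {#edge u x, edge v y#} + {#edge u v, edge x y#}"
    using sub unfolding E' by (simp only: add_diff_cancel_right' subset_mset.diff_add)
  moreover have "{#edge u x, edge v y#} \<subseteq># E'" unfolding E' by simp
  ultimately show ?thesis unfolding double_edge_swap_def by blast
qed

lemma symp_Gll_adj: "symp (Gll_adj V k)"
  unfolding Gll_adj_def by (auto intro: sympI)

subsection \<open>Swapping a pair of edges\<close>

definition swap_edges :: "'a multiset multiset \<Rightarrow> 'a \<Rightarrow> 'a \<Rightarrow> 'a \<Rightarrow> 'a \<Rightarrow> 'a multiset multiset" where
  "swap_edges E u v x y = E - {#edge u v, edge x y#} + {#edge u x, edge v y#}"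

lemma double_edge_swapE:
  assumes "double_edge_swap E E'"
  obtains u v x y where "{#edge u v, edge x y#} \<subseteq># E" "E' = swap_edges E u v x y"
  using assms unfolding double_edge_swap_def swap_edges_def by blast

lemma count_swap_edges:
  assumes "{#edge u v, edge x y#} \<subseteq># E"
  shows "count (swap_edges E u v x y) e + count {#edge u v, edge x y#} e
    = count E e + count {#edge u x, edge v y#} e"
  using mset_subset_eq_count[OF assms, of e] by (simp add: swap_edges_def)

lemma degree_swap_edges:
  assumes "{#edge u v, edge x y#} \<subseteq># E"
  shows "degree (swap_edges E u v x y) w = degree E w"
proof -
  have "degree E w = degree (E - {#edge u v, edge x y#}) w + degree {#edge u v, edge x y#} w"
    using assms by (metis degree_union subset_mset.diff_add)
  moreover have "degree {#edge u v, edge x y#} w = degree {#edge u x, edge v y#} w"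
    by (simp add: degree_def count_edge)
  ultimately show ?thesis unfolding swap_edges_def degree_union by linarith
qed

lemma mem_swap_edges_old:
  "e \<in># E \<Longrightarrow> e \<noteq> edge u v \<Longrightarrow> e \<noteq> edge x y \<Longrightarrow> e \<in># swap_edges E u v x y"
  unfolding swap_edges_def by (simp add: in_diff_count)

lemma mem_swap_edges_new: "edge u x \<in># swap_edges E u v x y" "edge v y \<in># swap_edges E u v x y"
  unfolding swap_edges_def by simp_all

lemma not_mem_swap_edges:
  "e \<notin># E \<Longrightarrow> e \<noteq> edge u x \<Longrightarrow> e \<noteq> edge v y \<Longrightarrow> e \<notin># swap_edges E u v x y"
  unfolding swap_edges_def by (auto dest: in_diffD)

lemma multiloop_graph_swap_edges:
  assumes ml: "multiloop_graph V E" and sub: "{#edge u v, edge x y#} \<subseteq># E"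
    and ux: "u \<noteq> x \<Longrightarrow> edge u x \<notin># E" and vy: "v \<noteq> y \<Longrightarrow> edge v y \<notin># E"
    and distinct: "u \<noteq> x \<Longrightarrow> v \<noteq> y \<Longrightarrow> edge u x \<noteq> edge v y"
  shows "multiloop_graph V (swap_edges E u v x y)"
proof -
  have g: "is_graph_on V E" using ml unfolding multiloop_graph_def by simp
  have inE: "edge u v \<in># E" "edge x y \<in># E" using mset_subset_eqD[OF sub] by auto
  have inV: "u \<in> V" "v \<in> V" "x \<in> V" "y \<in> V"
    using is_graph_on_edgeD[OF g inE(1)] is_graph_on_edgeD[OF g inE(2)] by auto
  have "is_graph_on V (swap_edges E u v x y)"
    unfolding is_graph_on_def
  proof
    fix e assume "e \<in># swap_edges E u v x y"
    then have "e \<in># E \<or> e = edge u x \<or> e = edge v y"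
      unfolding swap_edges_def by (auto dest: in_diffD)
    then show "\<exists>a b. a \<in> V \<and> b \<in> V \<and> e = edge a b"
      using g inV unfolding is_graph_on_def by blast
  qed
  moreover have "count (swap_edges E u v x y) (edge p q) \<le> 1" if pq: "p \<noteq> q" for p q
  proof -
    have "count E (edge p q) \<le> 1" using ml pq unfolding multiloop_graph_def by blast
    moreover have "count E (edge p q) = 0 \<and> edge p q \<noteq> edge v y" if "edge p q = edge u x"
    proof -
      have "u \<noteq> x" using pq that by (auto simp: edge_eq_iff)
      moreover have "edge u x \<noteq> edge v y"
        using \<open>u \<noteq> x\<close> distinct by (cases "v = y") (auto simp: edge_eq_iff)
      ultimately show ?thesis using that ux by (simp add: count_eq_zero_iff)
    qed
    moreover have "count E (edge p q) = 0" if "edge p q = edge v y"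
    proof -
      have "v \<noteq> y" using pq that by (auto simp: edge_eq_iff)
      then show ?thesis using that vy by (simp add: count_eq_zero_iff)
    qed
    ultimately show ?thesis using count_swap_edges[OF sub, of "edge p q"]
      by (auto split: if_splits)
  qed
  ultimately show ?thesis unfolding multiloop_graph_def by (metis edge_def)
qed

lemma swap_edges_reachable:
  assumes E: "E \<in> multiloop_graphs V k" and sub: "{#edge u v, edge x y#} \<subseteq># E"
    and "u \<noteq> x \<Longrightarrow> edge u x \<notin># E" and "v \<noteq> y \<Longrightarrow> edge v y \<notin># E"
    and "u \<noteq> x \<Longrightarrow> v \<noteq> y \<Longrightarrow> edge u x \<noteq> edge v y"
  shows "swap_edges E u v x y \<in> multiloop_graphs V k \<and> (Gll_adj V k)\<^sup>*\<^sup>* E (swap_edges E u v x y)"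
proof
  show E': "swap_edges E u v x y \<in> multiloop_graphs V k"
    using E multiloop_graph_swap_edges[OF _ sub assms(3-5)] degree_swap_edges[OF sub]
    unfolding multiloop_graphs_def by auto
  have "double_edge_swap E (swap_edges E u v x y)"
    using sub unfolding double_edge_swap_def swap_edges_def by blast
  then show "(Gll_adj V k)\<^sup>*\<^sup>* E (swap_edges E u v x y)"
    using E E' unfolding Gll_adj_def by (cases "E = swap_edges E u v x y") auto
qed

definition adjacent :: "'a multiset multiset \<Rightarrow> 'a \<Rightarrow> 'a \<Rightarrow> bool" where
  "adjacent E a b \<longleftrightarrow> a \<noteq> b \<and> edge a b \<in># E"

definition neighbours :: "'a multiset multiset \<Rightarrow> 'a \<Rightarrow> 'a set" where
  "neighbours E v = {u. adjacent E v u}"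

lemma adjacent_commute: "adjacent E a b \<longleftrightarrow> adjacent E b a"
  unfolding adjacent_def using edge_commute[of a b] by auto

lemma adjacentD: "adjacent E a b \<Longrightarrow> a \<noteq> b" "adjacent E a b \<Longrightarrow> edge a b \<in># E"
  "adjacent E a b \<Longrightarrow> edge b a \<in># E"
  unfolding adjacent_def using edge_commute[of a b] by auto

lemma adjacent_in_vertices:
  "E \<in> multiloop_graphs V k \<Longrightarrow> adjacent E a b \<Longrightarrow> a \<in> V \<and> b \<in> V"
  unfolding adjacent_def by (metis is_graph_on_edgeD multiloop_graphsD(2))

lemma finite_neighbours: "finite (neighbours E v)"
proof -
  have "neighbours E v \<subseteq> \<Union> (set_mset ` set_mset E)"
  proof
    fix u assume "u \<in> neighbours E v"
    then have "edge v u \<in># E" unfolding neighbours_def adjacent_def by simp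
    moreover have "u \<in># edge v u" by (simp add: edge_def)
    ultimately show "u \<in> \<Union> (set_mset ` set_mset E)" by blast
  qed
  then show ?thesis by (rule finite_subset) auto
qed

text \<open>Every edge at v is a loop (contributing 2) or the unique edge to one of its neighbours.\<close>

lemma degree_eq_card_neighbours:
  assumes ml: "multiloop_graph V E"
  shows "degree E v = card (neighbours E v) + 2 * count E (edge v v)"
proof -
  have g: "is_graph_on V E" using ml unfolding multiloop_graph_def by simp
  define N where "N = neighbours E v"
  have fin: "finite N" unfolding N_def by (rule finite_neighbours)
  have decomp: "E = filter_mset (\<lambda>e. v \<notin># e) E + replicate_mset (count E (edge v v)) (edge v v)
      + mset_set (edge v ` N)"
  proof (rule multiset_eqI)
    fix e
    show "count E e = count (filter_mset (\<lambda>e. v \<notin># e) E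
        + replicate_mset (count E (edge v v)) (edge v v) + mset_set (edge v ` N)) e"
    proof (cases "v \<in># e \<and> e \<in># E")
      case False
      then have "e \<notin> edge v ` N" unfolding N_def neighbours_def adjacent_def by (auto simp: edge_def)
      show ?thesis
      proof (cases "v \<in># e")
        case True
        then have "e \<notin># E" using False by blast
        then show ?thesis using True \<open>e \<notin> edge v ` N\<close> fin by (auto simp: count_mset_set' not_in_iff)
      next
        case False
        then have "e \<noteq> edge v v" by (auto simp: edge_def)
        then show ?thesis using False \<open>e \<notin> edge v ` N\<close> fin by (simp add: count_mset_set')
      qed
    next
      case True
      obtain p q where pq: "e = edge p q" using g True unfolding is_graph_on_def by blast
      have "v = p \<or> v = q" using True pq by (simp add: edge_def)
      then obtain r where r: "e = edge v r" using pq edge_commute by metis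
      show ?thesis
      proof (cases "r = v")
        case True
        then have "e \<notin> edge v ` N" using r unfolding N_def neighbours_def adjacent_def
          by (auto simp: edge_eq_iff)
        then show ?thesis using True r fin by (simp add: count_mset_set' edge_def)
      next
        case False
        then have "e \<in> edge v ` N" using r True unfolding N_def neighbours_def adjacent_def by auto
        moreover have "count E e = 1"
        proof -
          have "count E e \<le> 1" using ml False r unfolding multiloop_graph_def by auto
          moreover have "count E e \<ge> 1" using True by (simp add: Suc_le_eq)
          ultimately show ?thesis by linarith
        qed
        moreover have "e \<noteq> edge v v" using r False by (auto simp: edge_eq_iff)
        ultimately show ?thesis using True fin by (simp add: count_mset_set')
      qed
    qed
  qed
  have inj: "inj_on (edge v) N"
    unfolding N_def neighbours_def adjacent_def inj_on_def by (auto simp: edge_eq_iff)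
  have "degree (mset_set (edge v ` N)) v = (\<Sum>u\<in>N. count (edge v u) v)"
    unfolding degree_def using sum.reindex[OF inj] by (simp add: sum_unfold_sum_mset)
  also have "\<dots> = (\<Sum>u\<in>N. 1)"
    by (rule sum.cong) (auto simp: N_def neighbours_def adjacent_def count_edge)
  also have "\<dots> = card N" by simp
  finally have "degree (mset_set (edge v ` N)) v = card N" .
  moreover have "degree (filter_mset (\<lambda>e. v \<notin># e) E) v = 0"
    unfolding degree_def by (rule sum_mset.neutral) (auto simp: not_in_iff)
  moreover have "degree (replicate_mset (count E (edge v v)) (edge v v)) v = 2 * count E (edge v v)"
    unfolding degree_def by (simp add: edge_def sum_mset_replicate_mset)
  ultimately show ?thesis using N_def by (subst decomp) (simp only: degree_union)
qed

lemma multiloop_graphs_degree: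
  "E \<in> multiloop_graphs V k \<Longrightarrow> u \<in> V \<Longrightarrow> k u = card (neighbours E u) + 2 * count E (edge u u)"
  using degree_eq_card_neighbours multiloop_graphsD by metis

text \<open>Loop multiplicities are forced by the degrees once the neighbourhoods are known.\<close>

lemma multiloop_graphs_eqI:
  assumes E: "E \<in> multiloop_graphs V k" and E': "E' \<in> multiloop_graphs V k"
    and same: "\<And>a b. adjacent E a b \<longleftrightarrow> adjacent E' a b"
  shows "E = E'"
proof (rule multiset_eqI)
  fix e
  show "count E e = count E' e"
  proof (cases "e \<in># E \<or> e \<in># E'")
    case False then show ?thesis by (simp add: not_in_iff)
  next
    case True
    obtain p q where pV: "p \<in> V" and e: "e = edge p q"
      using True multiloop_graphsD(2)[OF E] multiloop_graphsD(2)[OF E']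
      unfolding is_graph_on_def by blast
    show ?thesis
    proof (cases "p = q")
      case True
      have "neighbours E p = neighbours E' p" unfolding neighbours_def using same by auto
      then show ?thesis
        using multiloop_graphs_degree[OF E pV] multiloop_graphs_degree[OF E' pV] e True by simp
    next
      case False
      have "count E e \<le> 1" "count E' e \<le> 1"
        using E E' False e unfolding multiloop_graphs_def multiloop_graph_def by auto
      moreover have "e \<in># E \<longleftrightarrow> e \<in># E'" using same[of p q] False e unfolding adjacent_def by simp
      then have "count E e = 0 \<longleftrightarrow> count E' e = 0" by (simp add: count_eq_zero_iff)
      ultimately show ?thesis by linarith
    qed
  qed
qed

lemma adjacent_swap_edges:
  assumes ml: "multiloop_graph V E" and sub: "{#edge u v, edge x y#} \<subseteq># E"
  shows "adjacent (swap_edges E u v x y) p q \<longleftrightarrow>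
    (adjacent E p q \<and> edge p q \<noteq> edge u v \<and> edge p q \<noteq> edge x y)
    \<or> (p \<noteq> q \<and> (edge p q = edge u x \<or> edge p q = edge v y))"
proof (cases "p = q")
  case True then show ?thesis unfolding adjacent_def by simp
next
  case pq: False
  have c: "count (swap_edges E u v x y) (edge p q) + count {#edge u v, edge x y#} (edge p q)
      = count E (edge p q) + count {#edge u x, edge v y#} (edge p q)"
    by (rule count_swap_edges[OF sub])
  have cE: "count E (edge p q) \<le> 1" using ml pq unfolding multiloop_graph_def by blast
  show ?thesis
  proof (cases "edge p q = edge u v \<or> edge p q = edge x y")
    case True
    then have "count {#edge u v, edge x y#} (edge p q) \<ge> 1" by auto
    moreover have "count {#edge u x, edge v y#} (edge p q) \<le> count (swap_edges E u v x y) (edge p q)"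
      unfolding swap_edges_def by simp
    ultimately have "count (swap_edges E u v x y) (edge p q) = count {#edge u x, edge v y#} (edge p q)"
      using c cE by linarith
    then have "edge p q \<in># swap_edges E u v x y \<longleftrightarrow> edge p q \<in># {#edge u x, edge v y#}"
      by (metis count_eq_zero_iff)
    then show ?thesis using True pq unfolding adjacent_def by auto
  next
    case False
    then have "count {#edge u v, edge x y#} (edge p q) = 0" by auto
    then have "count (swap_edges E u v x y) (edge p q)
        = count E (edge p q) + count {#edge u x, edge v y#} (edge p q)"
      using c by simp
    then have "edge p q \<in># swap_edges E u v x y \<longleftrightarrow> edge p q \<in># E \<or> edge p q \<in># {#edge u x, edge v y#}"
      by (metis add_is_0 count_eq_zero_iff count_union)
    then show ?thesis using False pq unfolding adjacent_def by auto
  qed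
qed

subsection \<open>Reducing the number of non-loop edges\<close>

definition is_loop :: "'a multiset \<Rightarrow> bool" where
  "is_loop e \<longleftrightarrow> (\<exists>u. e = edge u u)"

lemma is_loop_edge [simp]: "is_loop (edge a b) \<longleftrightarrow> a = b"
  unfolding is_loop_def by (auto simp: edge_eq_iff)

definition non_loop_count :: "'a multiset multiset \<Rightarrow> nat" where
  "non_loop_count E = size (filter_mset (\<lambda>e. \<not> is_loop e) E)"

lemma non_loop_count_pair:
  "non_loop_count {#edge a b, edge c d#} = (if a = b then 0 else 1) + (if c = d then 0 else 1)"
  unfolding non_loop_count_def by simp

lemma non_loop_count_swap_edges:
  assumes sub: "{#edge u v, edge x y#} \<subseteq># E"
  shows "non_loop_count (swap_edges E u v x y) + non_loop_count {#edge u v, edge x y#}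
    = non_loop_count E + non_loop_count {#edge u x, edge v y#}"
proof -
  let ?P = "\<lambda>e. \<not> is_loop e"
  have s: "filter_mset ?P {#edge u v, edge x y#} \<subseteq># filter_mset ?P E"
    using sub by (rule multiset_filter_mono)
  have eq: "filter_mset ?P (swap_edges E u v x y)
      = filter_mset ?P E - filter_mset ?P {#edge u v, edge x y#} + filter_mset ?P {#edge u x, edge v y#}"
    unfolding swap_edges_def by (simp only: filter_union_mset filter_diff_mset)
  have "size (filter_mset ?P {#edge u v, edge x y#}) \<le> size (filter_mset ?P E)"
    using s by (rule size_mset_mono)
  then show ?thesis unfolding non_loop_count_def eq size_union size_Diff_submset[OF s] by linarith
qed

lemma mset_pair_subsetI: "a \<in># E \<Longrightarrow> b \<in># E \<Longrightarrow> a \<noteq> b \<Longrightarrow> {#a, b#} \<subseteq># E"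
  by (simp add: insert_subset_eq_iff in_diff_count)

definition reducible :: "'a set \<Rightarrow> ('a \<Rightarrow> nat) \<Rightarrow> 'a multiset multiset \<Rightarrow> bool" where
  "reducible V k E \<longleftrightarrow> (\<exists>E' \<in> multiloop_graphs V k.
     (Gll_adj V k)\<^sup>*\<^sup>* E E' \<and> non_loop_count E' < non_loop_count E)"

text \<open>Swapping the two edges of a path a - x - b whose ends are not adjacent
  into the edge a - b and a loop at x.\<close>

lemma reducible_open_path:
  assumes E: "E \<in> multiloop_graphs V k" and xa: "adjacent E x a" and xb: "adjacent E x b"
    and ab: "a \<noteq> b" and nab: "\<not> adjacent E a b"
  shows "reducible V k E"
proof -
  have x: "x \<noteq> a" "x \<noteq> b" using xa xb by (auto dest: adjacentD)
  have sub: "{#edge a x, edge b x#} \<subseteq># E"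
    by (rule mset_pair_subsetI) (use xa xb ab x in \<open>auto dest: adjacentD simp: edge_eq_iff\<close>)
  have "swap_edges E a x b x \<in> multiloop_graphs V k \<and> (Gll_adj V k)\<^sup>*\<^sup>* E (swap_edges E a x b x)"
    by (rule swap_edges_reachable[OF E sub]) (use nab in \<open>auto simp: adjacent_def\<close>)
  moreover have "non_loop_count (swap_edges E a x b x) < non_loop_count E"
    using non_loop_count_swap_edges[OF sub] x ab by (simp add: non_loop_count_pair)
  ultimately show ?thesis unfolding reducible_def by blast
qed

text \<open>Two swaps: a - b, w - z become a - w, b - z, and then a - w, a - c become a loop at a and w - c.\<close>

lemma reducible_distant_edge:
  assumes E: "E \<in> multiloop_graphs V k" and ab: "adjacent E a b" and ac: "adjacent E a c"
    and bc: "b \<noteq> c" and wz: "adjacent E w z" and wa: "w \<noteq> a" and za: "z \<noteq> a"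
    and naw: "\<not> adjacent E a w" and naz: "\<not> adjacent E a z"
    and nbz: "\<not> adjacent E b z" and ncw: "\<not> adjacent E c w"
  shows "reducible V k E"
proof -
  have d: "a \<noteq> b" "a \<noteq> c" "w \<noteq> z" using ab ac wz by (auto dest: adjacentD)
  have d2: "w \<noteq> b" "w \<noteq> c" "z \<noteq> b" "z \<noteq> c" using ab ac naw naz by auto
  have sub1: "{#edge a b, edge w z#} \<subseteq># E"
    by (rule mset_pair_subsetI) (use ab wz wa za in \<open>auto dest: adjacentD simp: edge_eq_iff\<close>)
  define E1 where "E1 = swap_edges E a b w z"
  have s1: "E1 \<in> multiloop_graphs V k \<and> (Gll_adj V k)\<^sup>*\<^sup>* E E1"
    unfolding E1_def
    by (rule swap_edges_reachable[OF E sub1])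
      (use naw nbz d d2 wa za in \<open>auto simp: edge_eq_iff adjacent_def\<close>)
  have n1: "non_loop_count E1 = non_loop_count E"
    using non_loop_count_swap_edges[OF sub1] d d2 wa za unfolding E1_def
    by (simp add: non_loop_count_pair)
  have in1: "edge w a \<in># E1" unfolding E1_def by (metis mem_swap_edges_new(1) edge_commute)
  have in2: "edge c a \<in># E1" unfolding E1_def
    by (rule mem_swap_edges_old) (use ac d bc wa za in \<open>auto dest: adjacentD simp: edge_eq_iff\<close>)
  have sub2: "{#edge w a, edge c a#} \<subseteq># E1"
    by (rule mset_pair_subsetI[OF in1 in2]) (use d2 in \<open>auto simp: edge_eq_iff\<close>)
  have "edge w c \<notin># E" using ncw d2 edge_commute[of w c] unfolding adjacent_def by auto
  then have nwc: "edge w c \<notin># E1" unfolding E1_def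
    by (rule not_mem_swap_edges) (use d d2 wa in \<open>auto simp: edge_eq_iff\<close>)
  define E2 where "E2 = swap_edges E1 w a c a"
  have s2: "E2 \<in> multiloop_graphs V k \<and> (Gll_adj V k)\<^sup>*\<^sup>* E1 E2"
    unfolding E2_def by (rule swap_edges_reachable[OF conjunct1[OF s1] sub2]) (use nwc in auto)
  have "non_loop_count E2 < non_loop_count E1"
    using non_loop_count_swap_edges[OF sub2] d d2 wa unfolding E2_def
    by (simp add: non_loop_count_pair)
  then show ?thesis using s1 s2 n1 unfolding reducible_def by (metis rtranclp_trans)
qed

text \<open>Three swaps through the loop at an isolated vertex y: a - b and y - y become a - y, b - y;
  then y - a, c - a become a loop at a and y - c; finally y - b, d - b become a loop at b and
  y - d.  The first swap adds a non-loop edge, the other two remove one each.\<close>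

lemma reducible_isolated_loop:
  assumes E: "E \<in> multiloop_graphs V k" and ab: "adjacent E a b" and ac: "adjacent E a c"
    and ad: "adjacent E a d" and bc: "b \<noteq> c" and bd': "b \<noteq> d" and cd: "c \<noteq> d"
    and bd: "adjacent E b d" and ny: "\<forall>z. \<not> adjacent E y z" and yy: "edge y y \<in># E"
  shows "reducible V k E"
proof -
  have d: "a \<noteq> b" "a \<noteq> c" "a \<noteq> d" using ab ac ad by (auto dest: adjacentD)
  have dy: "y \<noteq> a" "y \<noteq> b" "y \<noteq> c" "y \<noteq> d"
    using spec[OF ny, of b] spec[OF ny, of a] ab ac ad adjacent_commute[of E a] by auto
  have ny': "edge y z \<notin># E" "edge z y \<notin># E" if "y \<noteq> z" for z
    using ny that edge_commute[of z y] unfolding adjacent_def by auto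
  have sub1: "{#edge a b, edge y y#} \<subseteq># E"
    by (rule mset_pair_subsetI) (use ab yy dy in \<open>auto dest: adjacentD simp: edge_eq_iff\<close>)
  define E1 where "E1 = swap_edges E a b y y"
  have s1: "E1 \<in> multiloop_graphs V k \<and> (Gll_adj V k)\<^sup>*\<^sup>* E E1"
    unfolding E1_def
    by (rule swap_edges_reachable[OF E sub1]) (use ny' d dy in \<open>auto simp: edge_eq_iff\<close>)
  have n1: "non_loop_count E1 = non_loop_count E + 1"
    using non_loop_count_swap_edges[OF sub1] d dy unfolding E1_def by (simp add: non_loop_count_pair)
  have in1: "edge y a \<in># E1" unfolding E1_def by (metis mem_swap_edges_new(1) edge_commute)
  have in2: "edge c a \<in># E1" unfolding E1_def
    by (rule mem_swap_edges_old) (use ac d bc dy in \<open>auto dest: adjacentD simp: edge_eq_iff\<close>)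
  have sub2: "{#edge y a, edge c a#} \<subseteq># E1"
    by (rule mset_pair_subsetI[OF in1 in2]) (use dy in \<open>auto simp: edge_eq_iff\<close>)
  have nyc: "edge y c \<notin># E1" unfolding E1_def
    by (rule not_mem_swap_edges) (use ny' d dy bc in \<open>auto simp: edge_eq_iff\<close>)
  define E2 where "E2 = swap_edges E1 y a c a"
  have s2: "E2 \<in> multiloop_graphs V k \<and> (Gll_adj V k)\<^sup>*\<^sup>* E1 E2"
    unfolding E2_def by (rule swap_edges_reachable[OF conjunct1[OF s1] sub2]) (use nyc in auto)
  have n2: "non_loop_count E2 + 1 = non_loop_count E1"
    using non_loop_count_swap_edges[OF sub2] d dy unfolding E2_def by (simp add: non_loop_count_pair)
  have in3: "edge y b \<in># E2" unfolding E2_def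
  proof (rule mem_swap_edges_old)
    show "edge y b \<in># E1" unfolding E1_def by (metis mem_swap_edges_new(2) edge_commute)
  qed (use d dy in \<open>auto simp: edge_eq_iff\<close>)
  have in4: "edge d b \<in># E2" unfolding E2_def
  proof (rule mem_swap_edges_old)
    show "edge d b \<in># E1" unfolding E1_def
      by (rule mem_swap_edges_old) (use bd d dy in \<open>auto dest: adjacentD simp: edge_eq_iff\<close>)
  qed (use d dy cd in \<open>auto simp: edge_eq_iff\<close>)
  have sub3: "{#edge y b, edge d b#} \<subseteq># E2"
    by (rule mset_pair_subsetI[OF in3 in4]) (use dy in \<open>auto simp: edge_eq_iff\<close>)
  have nyd: "edge y d \<notin># E2" unfolding E2_def
  proof (rule not_mem_swap_edges)
    show "edge y d \<notin># E1" unfolding E1_def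
      by (rule not_mem_swap_edges) (use ny' d dy bd' in \<open>auto simp: edge_eq_iff\<close>)
  qed (use d dy cd in \<open>auto simp: edge_eq_iff\<close>)
  define E3 where "E3 = swap_edges E2 y b d b"
  have s3: "E3 \<in> multiloop_graphs V k \<and> (Gll_adj V k)\<^sup>*\<^sup>* E2 E3"
    unfolding E3_def by (rule swap_edges_reachable[OF conjunct1[OF s2] sub3]) (use nyd in auto)
  have n3: "non_loop_count E3 + 1 = non_loop_count E2"
    using non_loop_count_swap_edges[OF sub3] d dy bd' unfolding E3_def
    by (simp add: non_loop_count_pair)
  have "(Gll_adj V k)\<^sup>*\<^sup>* E E3" using s1 s2 s3 by (meson rtranclp_trans)
  moreover have "non_loop_count E3 < non_loop_count E" using n1 n2 n3 by linarith
  ultimately show ?thesis using s3 unfolding reducible_def by blast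
qed

definition cluster_graph :: "'a multiset multiset \<Rightarrow> bool" where
  "cluster_graph E \<longleftrightarrow> (\<forall>x a b. adjacent E x a \<and> adjacent E x b \<and> a \<noteq> b \<longrightarrow> adjacent E a b)"

definition matching :: "'a multiset multiset \<Rightarrow> bool" where
  "matching E \<longleftrightarrow> (\<forall>a b c. adjacent E a b \<and> adjacent E a c \<longrightarrow> b = c)"

lemma cluster_graph_adjacent_trans:
  "cluster_graph E \<Longrightarrow> adjacent E a b \<Longrightarrow> adjacent E b c \<Longrightarrow> a \<noteq> c \<Longrightarrow> adjacent E a c"
  unfolding cluster_graph_def using adjacent_commute by metis

lemma cluster_graph_neighbours:
  assumes cl: "cluster_graph E" and au: "adjacent E a u"
  shows "neighbours E u = insert a (neighbours E a - {u})"
proof -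
  have ua: "adjacent E u a" using au adjacent_commute by metis
  have "adjacent E u w \<longleftrightarrow> w = a \<or> (adjacent E a w \<and> w \<noteq> u)" for w
  proof
    assume uw: "adjacent E u w"
    then have "w \<noteq> u" by (auto dest: adjacentD)
    then show "w = a \<or> (adjacent E a w \<and> w \<noteq> u)"
      using cluster_graph_adjacent_trans[OF cl au uw] by blast
  next
    assume "w = a \<or> (adjacent E a w \<and> w \<noteq> u)"
    then show "adjacent E u w" using ua cluster_graph_adjacent_trans[OF cl ua, of w] by blast
  qed
  then show ?thesis unfolding neighbours_def by auto
qed

lemma cluster_graph_card_neighbours:
  assumes cl: "cluster_graph E" and au: "adjacent E a u"
  shows "card (neighbours E u) = card (neighbours E a)"
proof -
  have "a \<notin> neighbours E a" "u \<in> neighbours E a"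
    using au unfolding neighbours_def adjacent_def by auto
  then show ?thesis unfolding cluster_graph_neighbours[OF cl au]
    using finite_neighbours[of E a] card.remove[of "neighbours E a" u] by simp
qed

lemma cluster_graph_complete:
  assumes E: "E \<in> multiloop_graphs V k" and cl: "cluster_graph E"
    and dominating: "\<And>y. y \<in> V \<Longrightarrow> y \<noteq> a \<Longrightarrow> adjacent E a y" and v: "v \<in> V"
  shows "neighbours E v = V - {v}"
proof
  show "neighbours E v \<subseteq> V - {v}"
    using adjacent_in_vertices[OF E, of v] adjacentD(1)[of E v] unfolding neighbours_def by blast
  show "V - {v} \<subseteq> neighbours E v"
  proof
    fix u assume u: "u \<in> V - {v}"
    have "adjacent E v u"
    proof (cases "v = a")
      case False
      then have va: "adjacent E v a" using dominating[OF v] adjacent_commute by metis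
      show ?thesis
      proof (cases "u = a")
        case False
        then show ?thesis using cluster_graph_adjacent_trans[OF cl va dominating[of u]] u by blast
      qed (use va in simp)
    qed (use dominating u in blast)
    then show "u \<in> neighbours E v" unfolding neighbours_def by simp
  qed
qed

lemma degree_if_complete:
  assumes E: "E \<in> multiloop_graphs V k" and fin: "finite V" and v: "v \<in> V"
    and "neighbours E v = V - {v}"
  shows "card V - 1 \<le> k v \<and> even (k v - (card V - 1))"
  using multiloop_graphs_degree[OF E v] assms(3,4) fin by simp

text \<open>An odd-degree vertex lies in the clique of a, so a has an odd number, hence at least three,
  of neighbours; y lies outside that clique, so it is isolated and, as k y \<ge> 1, carries a loop.\<close>

lemma reducible_clique_and_isolated:
  assumes E: "E \<in> multiloop_graphs V k" and k1: "\<forall>u\<in>V. k u \<ge> 1" and odd: "\<exists>u\<in>V. odd (k u)"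
    and cl: "cluster_graph E" and ab: "adjacent E a b" and ac: "adjacent E a c" and bc: "b \<noteq> c"
    and near: "\<forall>w z. adjacent E w z \<longrightarrow> w = a \<or> adjacent E a w"
    and y: "y \<in> V" "y \<noteq> a" "\<not> adjacent E a y"
  shows "reducible V k E"
proof -
  have ny: "\<forall>z. \<not> adjacent E y z" using near y by blast
  then have "neighbours E y = {}" unfolding neighbours_def by simp
  then have "k y = 2 * count E (edge y y)" using multiloop_graphs_degree[OF E y(1)] by simp
  then have "count E (edge y y) \<noteq> 0" using k1 y(1) by auto
  then have yy: "edge y y \<in># E" by (metis count_eq_zero_iff)
  obtain u where u: "u \<in> V" "odd (k u)" using odd by blast
  then have "odd (card (neighbours E u))" using multiloop_graphs_degree[OF E u(1)] by simp
  then have "neighbours E u \<noteq> {}" by auto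
  then obtain u' where "adjacent E u u'" unfolding neighbours_def by blast
  then have "u = a \<or> adjacent E a u" using near by blast
  then have "odd (card (neighbours E a))"
    using \<open>odd (card (neighbours E u))\<close> cluster_graph_card_neighbours[OF cl] by auto
  then have "neighbours E a \<noteq> {b, c}" using bc by auto
  then obtain d where ad: "adjacent E a d" and db: "d \<noteq> b" and dc: "d \<noteq> c"
    using ab ac unfolding neighbours_def by auto
  have "adjacent E b d"
    using cluster_graph_adjacent_trans[OF cl _ ad] ab adjacent_commute db by metis
  then show ?thesis
    using reducible_isolated_loop[OF E ab ac ad bc db[symmetric] dc[symmetric] _ ny yy] by blast
qed

lemma reducible_if_not_matching:
  assumes fin: "finite V" and k1: "\<forall>u\<in>V. k u \<ge> 1" and odd: "\<exists>u\<in>V. odd (k u)"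
    and not_complete: "\<exists>v\<in>V. k v < card V - 1 \<or> odd (k v - (card V - 1))"
    and E: "E \<in> multiloop_graphs V k" and "\<not> matching E"
  shows "reducible V k E"
proof -
  obtain a b c where ab: "adjacent E a b" and ac: "adjacent E a c" and bc: "b \<noteq> c"
    using \<open>\<not> matching E\<close> unfolding matching_def by blast
  show ?thesis
  proof (cases "cluster_graph E")
    case False
    then show ?thesis unfolding cluster_graph_def using reducible_open_path[OF E] by blast
  next
    case cl: True
    show ?thesis
    proof (cases "\<exists>w z. adjacent E w z \<and> w \<noteq> a \<and> z \<noteq> a \<and> \<not> adjacent E a w \<and> \<not> adjacent E a z")
      case True
      then obtain w z where wz: "adjacent E w z" "w \<noteq> a" "z \<noteq> a" "\<not> adjacent E a w"
        "\<not> adjacent E a z" by blast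
      have "\<not> adjacent E b z" "\<not> adjacent E c w"
        using cluster_graph_adjacent_trans[OF cl ab, of z] cluster_graph_adjacent_trans[OF cl ac, of w]
          wz by auto
      then show ?thesis using reducible_distant_edge[OF E ab ac bc wz] by blast
    next
      case False
      have near: "\<forall>w z. adjacent E w z \<longrightarrow> w = a \<or> adjacent E a w"
      proof (intro allI impI)
        fix w z assume wz: "adjacent E w z"
        show "w = a \<or> adjacent E a w"
        proof (rule ccontr)
          assume "\<not> ?thesis"
          then have "w \<noteq> a" "\<not> adjacent E a w" by auto
          moreover have "z \<noteq> a" using wz \<open>\<not> adjacent E a w\<close> adjacent_commute by metis
          moreover have "\<not> adjacent E a z"
            using cluster_graph_adjacent_trans[OF cl, of a z w] wz adjacent_commute[of E w z]
              \<open>w \<noteq> a\<close> \<open>\<not> adjacent E a w\<close> by auto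
          ultimately show False using False wz by blast
        qed
      qed
      have "\<exists>y\<in>V. y \<noteq> a \<and> \<not> adjacent E a y"
      proof (rule ccontr)
        assume "\<not> ?thesis"
        then have "\<And>y. y \<in> V \<Longrightarrow> y \<noteq> a \<Longrightarrow> adjacent E a y" by blast
        then have complete: "neighbours E v = V - {v}" if "v \<in> V" for v
          using cluster_graph_complete[OF E cl _ that] by blast
        obtain v where v: "v \<in> V" and nc: "k v < card V - 1 \<or> odd (k v - (card V - 1))"
          using not_complete by blast
        have "card V - 1 \<le> k v" "even (k v - (card V - 1))"
          using degree_if_complete[OF E fin v complete[OF v]] by auto
        then show False using nc not_le by blast
      qed
      then obtain y where "y \<in> V" "y \<noteq> a" "\<not> adjacent E a y" by blast
      then show ?thesis by (rule reducible_clique_and_isolated[OF E k1 odd cl ab ac bc near])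
    qed
  qed
qed

lemma reaches_matching:
  assumes fin: "finite V" and k1: "\<forall>u\<in>V. k u \<ge> 1" and odd: "\<exists>u\<in>V. odd (k u)"
    and not_complete: "\<exists>v\<in>V. k v < card V - 1 \<or> odd (k v - (card V - 1))"
  shows "E \<in> multiloop_graphs V k \<Longrightarrow>
    \<exists>M \<in> multiloop_graphs V k. (Gll_adj V k)\<^sup>*\<^sup>* E M \<and> matching M"
proof (induction "non_loop_count E" arbitrary: E rule: less_induct)
  case less
  show ?case
  proof (cases "matching E")
    case False
    then obtain E' where E': "E' \<in> multiloop_graphs V k" "(Gll_adj V k)\<^sup>*\<^sup>* E E'"
      "non_loop_count E' < non_loop_count E"
      using reducible_if_not_matching[OF assms less.prems] unfolding reducible_def by blast
    obtain M where "M \<in> multiloop_graphs V k" "(Gll_adj V k)\<^sup>*\<^sup>* E' M" "matching M"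
      using less.hyps[OF E'(3,1)] by blast
    then show ?thesis using rtranclp_trans[OF E'(2)] by blast
  next
    case True
    then show ?thesis using less.prems by blast
  qed
qed

subsection \<open>Connecting matchings\<close>

lemma matching_card_neighbours:
  assumes E: "E \<in> multiloop_graphs V k" and "matching E" and v: "v \<in> V"
  shows "card (neighbours E v) = k v mod 2"
proof -
  have "card (neighbours E v) \<le> Suc 0"
    using \<open>matching E\<close> finite_neighbours[of E v] unfolding matching_def neighbours_def
    by (subst card_le_Suc0_iff_eq) auto
  then show ?thesis using multiloop_graphs_degree[OF E v] by presburger
qed

lemma matching_swap_edges:
  assumes ml: "multiloop_graph V M" and m: "matching M"
    and ab: "adjacent M a b" and cd: "adjacent M c d"
    and dist: "a \<noteq> c" "a \<noteq> d" "b \<noteq> c" "b \<noteq> d"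
  shows "matching (swap_edges M a b c d)"
proof -
  have d: "a \<noteq> b" "c \<noteq> d" using ab cd by (auto dest: adjacentD)
  have sub: "{#edge a b, edge c d#} \<subseteq># M"
    by (rule mset_pair_subsetI) (use ab cd d dist in \<open>auto dest: adjacentD simp: edge_eq_iff\<close>)
  note adj = adjacent_swap_edges[OF ml sub]
  have unique: "q1 = q2" if "adjacent M p q1" "adjacent M p q2" for p q1 q2
    using m that unfolding matching_def by blast
  have ba: "adjacent M b a" and dc: "adjacent M d c" using ab cd adjacent_commute by metis+
  have partner: "q = c" if "adjacent (swap_edges M a b c d) a q" for q
    using that unique[OF ab, of q] d dist unfolding adj by (auto simp: edge_eq_iff)
  moreover have "q = a" if "adjacent (swap_edges M a b c d) c q" for q
    using that unique[OF cd, of q] d dist unfolding adj by (auto simp: edge_eq_iff)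
  moreover have "q = d" if "adjacent (swap_edges M a b c d) b q" for q
    using that unique[OF ba, of q] d dist unfolding adj by (auto simp: edge_eq_iff edge_commute[of a b])
  moreover have "q = b" if "adjacent (swap_edges M a b c d) d q" for q
    using that unique[OF dc, of q] d dist unfolding adj by (auto simp: edge_eq_iff edge_commute[of c d])
  moreover have "adjacent M p q"
    if "adjacent (swap_edges M a b c d) p q" "p \<notin> {a, b, c, d}" for p q
    using that unfolding adj by (auto simp: edge_eq_iff)
  ultimately show ?thesis unfolding matching_def using unique by (metis insert_iff singletonD)
qed

definition common_adjacencies :: "'a multiset multiset \<Rightarrow> 'a multiset multiset \<Rightarrow> ('a \<times> 'a) set" where
  "common_adjacencies M M' = {(p, q). adjacent M p q \<and> adjacent M' p q}"

text \<open>If M' pairs a with c but M does not, swapping the M-edges at a and c creates the pair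
  a - c and destroys only pairs that M' does not have.\<close>

lemma matching_swap_towards:
  assumes M: "M \<in> multiloop_graphs V k" and m: "matching M"
    and M': "M' \<in> multiloop_graphs V k" and m': "matching M'"
    and ac': "adjacent M' a c" and nac: "\<not> adjacent M a c"
  shows "\<exists>M1 \<in> multiloop_graphs V k. (Gll_adj V k)\<^sup>*\<^sup>* M M1 \<and> matching M1
    \<and> common_adjacencies M M' \<subset> common_adjacencies M1 M'"
proof -
  have ca': "adjacent M' c a" using ac' adjacent_commute by metis
  have partner: "\<exists>q. adjacent M p q" if "adjacent M' p p'" for p p'
  proof -
    have "p \<in> V" using adjacent_in_vertices[OF M' that] by simp
    then have "card (neighbours M p) = card (neighbours M' p)"
      using matching_card_neighbours[OF M m] matching_card_neighbours[OF M' m'] by simp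
    moreover have "neighbours M' p \<noteq> {}" using that unfolding neighbours_def by auto
    ultimately have "neighbours M p \<noteq> {}" using finite_neighbours[of M' p] by auto
    then show ?thesis unfolding neighbours_def by auto
  qed
  obtain b d where ab: "adjacent M a b" and cd: "adjacent M c d"
    using partner[OF ac'] partner[OF ca'] by blast
  have unique: "q1 = q2" if "adjacent N p q1" "adjacent N p q2" "matching N" for N p q1 q2
    using that unfolding matching_def by blast
  have ba: "adjacent M b a" and dc: "adjacent M d c" using ab cd adjacent_commute by metis+
  have dist: "a \<noteq> c" "a \<noteq> d" "b \<noteq> c" "b \<noteq> d"
    using ab cd ac' nac adjacent_commute[of M c a] unique[OF ba _ m, of c] dc
    by (auto dest: adjacentD)
  have sub: "{#edge a b, edge c d#} \<subseteq># M"
    by (rule mset_pair_subsetI) (use ab cd dist in \<open>auto dest: adjacentD simp: edge_eq_iff\<close>)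
  have "\<not> adjacent M b d" using unique[OF ba _ m, of d] dist by auto
  then have M1: "swap_edges M a b c d \<in> multiloop_graphs V k
      \<and> (Gll_adj V k)\<^sup>*\<^sup>* M (swap_edges M a b c d)"
    by (intro swap_edges_reachable[OF M sub])
      (use nac dist ab cd in \<open>auto simp: edge_eq_iff adjacent_def\<close>)
  note adj = adjacent_swap_edges[OF multiloop_graphsD(1)[OF M] sub]
  have "common_adjacencies M M' \<subseteq> common_adjacencies (swap_edges M a b c d) M'"
  proof (clarsimp simp: common_adjacencies_def adj)
    fix p q assume pq: "adjacent M p q" "adjacent M' p q"
    then have "adjacent M' q p" using adjacent_commute by metis
    then show "edge p q \<noteq> edge a b \<and> edge p q \<noteq> edge c d"
      using pq(2) unique[OF ac' _ m'] unique[OF ca' _ m'] dist by (auto simp: edge_eq_iff)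
  qed
  moreover have "(a, c) \<in> common_adjacencies (swap_edges M a b c d) M' - common_adjacencies M M'"
    using ac' nac dist unfolding common_adjacencies_def adj by simp
  ultimately show ?thesis
    using M1 matching_swap_edges[OF multiloop_graphsD(1)[OF M] m ab cd dist] by blast
qed

lemma matchings_connected:
  assumes fin: "finite V" and M': "M' \<in> multiloop_graphs V k" and m': "matching M'"
  shows "M \<in> multiloop_graphs V k \<Longrightarrow> matching M \<Longrightarrow> (Gll_adj V k)\<^sup>*\<^sup>* M M'"
proof (induction "card (V \<times> V) - card (common_adjacencies M M')" arbitrary: M rule: less_induct)
  case less
  note M = less.prems(1) and m = less.prems(2)
  show ?case
  proof (cases "\<forall>a c. adjacent M' a c \<longrightarrow> adjacent M a c")
    case True
    have "neighbours M a = neighbours M' a" for a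
    proof (cases "a \<in> V")
      case a: True
      have "neighbours M' a \<subseteq> neighbours M a" using True unfolding neighbours_def by auto
      moreover have "card (neighbours M' a) = card (neighbours M a)"
        using matching_card_neighbours[OF M m a] matching_card_neighbours[OF M' m' a] by simp
      ultimately show ?thesis using card_subset_eq[OF finite_neighbours] by metis
    next
      case False
      then show ?thesis
        using adjacent_in_vertices[OF M, of a] adjacent_in_vertices[OF M', of a]
        unfolding neighbours_def by auto
    qed
    then have "M = M'"
      by (intro multiloop_graphs_eqI[OF M M']) (auto simp: neighbours_def)
    then show ?thesis by simp
  next
    case False
    then obtain a c where "adjacent M' a c" "\<not> adjacent M a c" by blast
    then obtain M1 where M1: "M1 \<in> multiloop_graphs V k" "(Gll_adj V k)\<^sup>*\<^sup>* M M1" "matching M1"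
      and grow: "common_adjacencies M M' \<subset> common_adjacencies M1 M'"
      using matching_swap_towards[OF M m M' m'] by blast
    have sub: "common_adjacencies M1 M' \<subseteq> V \<times> V"
      using adjacent_in_vertices[OF M1(1)] unfolding common_adjacencies_def by auto
    then have "finite (common_adjacencies M1 M')" using fin finite_subset by blast
    then have "card (common_adjacencies M M') < card (common_adjacencies M1 M')"
      using grow by (rule psubset_card_mono)
    moreover have "card (common_adjacencies M1 M') \<le> card (V \<times> V)"
      using sub fin by (intro card_mono) auto
    ultimately have "(Gll_adj V k)\<^sup>*\<^sup>* M1 M'" using less.hyps M1(1,3) by simp
    then show ?thesis by (rule rtranclp_trans[OF M1(2)])
  qed
qed

subsection \<open>Isolated graphs\<close>

lemma not_Gll_connected_if_isolated:
  assumes Z: "Z \<in> multiloop_graphs V k"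
    and isolated: "\<And>Y. Y \<in> multiloop_graphs V k \<Longrightarrow> double_edge_swap Z Y \<Longrightarrow> Y = Z"
    and two: "\<exists>E1 \<in> multiloop_graphs V k. \<exists>E2 \<in> multiloop_graphs V k. E1 \<noteq> E2"
  shows "\<not> Gll_connected V k"
proof
  assume conn: "Gll_connected V k"
  obtain X where X: "X \<in> multiloop_graphs V k" "X \<noteq> Z" using two by metis
  have no_step: "\<not> Gll_adj V k Z Y" for Y
  proof
    assume "Gll_adj V k Z Y"
    then have "Y \<in> multiloop_graphs V k" "double_edge_swap Z Y" "Y \<noteq> Z"
      unfolding Gll_adj_def using double_edge_swap_sym by auto
    then show False using isolated by blast
  qed
  have "(Gll_adj V k)\<^sup>*\<^sup>* Z X" using conn Z X(1) unfolding Gll_connected_def by blast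
  then show False
    by (cases rule: converse_rtranclpE) (use X(2) no_step in auto)
qed

definition loops :: "'a set \<Rightarrow> ('a \<Rightarrow> nat) \<Rightarrow> 'a multiset multiset" where
  "loops V m = (\<Sum>u\<in>V. replicate_mset (m u) (edge u u))"

lemma mem_loops: "finite V \<Longrightarrow> e \<in># loops V m \<Longrightarrow> \<exists>u\<in>V. e = edge u u"
  unfolding loops_def by (auto simp: set_mset_sum split: if_splits)

lemma count_loops: "finite V \<Longrightarrow> v \<in> V \<Longrightarrow> count (loops V m) (edge v v) = m v"
  unfolding loops_def count_sum by (simp add: edge_eq_iff if_distrib)

lemma not_adjacent_loops: "finite V \<Longrightarrow> \<not> adjacent (loops V m) p q"
  using mem_loops[of V "edge p q" m] unfolding adjacent_def by (auto simp: edge_eq_iff)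

lemma adjacent_add_loops: "finite V \<Longrightarrow> adjacent (A + loops V m) p q \<longleftrightarrow> adjacent A p q"
  using not_adjacent_loops[of V m p q] unfolding adjacent_def by auto

lemma multiloop_graph_loops:
  assumes "finite V" shows "multiloop_graph V (loops V m)"
  unfolding multiloop_graph_def is_graph_on_def
proof (intro conjI allI impI ballI)
  fix e assume "e \<in># loops V m"
  then show "\<exists>u v. u \<in> V \<and> v \<in> V \<and> e = edge u v" using mem_loops[OF assms] by blast
next
  fix p q :: 'a assume "p \<noteq> q"
  then show "count (loops V m) (edge p q) \<le> 1"
    using not_adjacent_loops[OF assms, of m p q] unfolding adjacent_def by (simp add: not_in_iff)
qed

text \<open>A swap of two loops either changes nothing or creates a double edge.\<close>

lemma double_edge_swap_loops:
  assumes loops: "\<forall>e \<in># E. is_loop e" and ml': "multiloop_graph V E'"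
    and ds: "double_edge_swap E E'"
  shows "E' = E"
proof -
  obtain u v x y where sub: "{#edge u v, edge x y#} \<subseteq># E" and E': "E' = swap_edges E u v x y"
    using ds by (rule double_edge_swapE)
  have "edge u v \<in># E" "edge x y \<in># E" using mset_subset_eqD[OF sub] by auto
  then have uv: "v = u" and xy: "y = x" using loops by fastforce+
  show ?thesis
  proof (cases "u = x")
    case True
    then show ?thesis using E' sub uv xy unfolding swap_edges_def by (metis subset_mset.diff_add)
  next
    case False
    have "count E' (edge u x) \<ge> 2" unfolding E' swap_edges_def uv xy by simp
    then show ?thesis using ml' False unfolding multiloop_graph_def by fastforce
  qed
qed

lemma loops_in_multiloop_graphs:
  assumes fin: "finite V" and even: "\<forall>u\<in>V. even (k u)"
  shows "loops V (\<lambda>u. k u div 2) \<in> multiloop_graphs V k"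
proof -
  have ml: "multiloop_graph V (loops V (\<lambda>u. k u div 2))"
    by (rule multiloop_graph_loops[OF fin])
  moreover have "degree (loops V (\<lambda>u. k u div 2)) v = k v" if v: "v \<in> V" for v
  proof -
    have "neighbours (loops V (\<lambda>u. k u div 2)) v = {}"
      using not_adjacent_loops[OF fin] unfolding neighbours_def by simp
    then show ?thesis using degree_eq_card_neighbours[OF ml, of v] count_loops[OF fin v] even v
      by simp
  qed
  ultimately show ?thesis unfolding multiloop_graphs_def by blast
qed

definition complete_edges :: "'a set \<Rightarrow> 'a multiset multiset" where
  "complete_edges V = mset_set {edge p q | p q. p \<in> V \<and> q \<in> V \<and> p \<noteq> q}"

lemma mem_complete_edges:
  assumes "finite V"
  shows "e \<in># complete_edges V \<longleftrightarrow> (\<exists>p q. p \<in> V \<and> q \<in> V \<and> p \<noteq> q \<and> e = edge p q)"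
proof -
  have "{edge p q | p q. p \<in> V \<and> q \<in> V \<and> p \<noteq> q} \<subseteq> (\<lambda>(p, q). edge p q) ` (V \<times> V)" by auto
  then have "finite {edge p q | p q. p \<in> V \<and> q \<in> V \<and> p \<noteq> q}"
    by (rule finite_subset) (use assms in simp)
  then show ?thesis unfolding complete_edges_def by auto
qed

lemma complete_in_multiloop_graphs:
  assumes fin: "finite V" and full: "\<forall>v\<in>V. card V - 1 \<le> k v \<and> even (k v - (card V - 1))"
  shows "complete_edges V + loops V (\<lambda>u. (k u - (card V - 1)) div 2) \<in> multiloop_graphs V k"
    (is "?K \<in> _")
proof -
  have "adjacent (complete_edges V) p q \<longleftrightarrow> p \<in> V \<and> q \<in> V \<and> p \<noteq> q" for p q
    unfolding adjacent_def mem_complete_edges[OF fin] by (auto simp: edge_eq_iff)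
  then have adj: "adjacent ?K p q \<longleftrightarrow> p \<in> V \<and> q \<in> V \<and> p \<noteq> q" for p q
    using adjacent_add_loops[OF fin] by blast
  have ml: "multiloop_graph V ?K"
    unfolding multiloop_graph_def is_graph_on_def
  proof (intro conjI allI impI ballI)
    fix e assume "e \<in># ?K"
    then show "\<exists>u v. u \<in> V \<and> v \<in> V \<and> e = edge u v"
      using mem_complete_edges[OF fin, of e] mem_loops[OF fin, of e] by (metis union_iff)
  next
    fix p q :: 'a assume "p \<noteq> q"
    then have "count (loops V (\<lambda>u. (k u - (card V - 1)) div 2)) (edge p q) = 0"
      using not_adjacent_loops[OF fin, of "\<lambda>u. (k u - (card V - 1)) div 2" p q]
      unfolding adjacent_def by (simp add: count_eq_zero_iff)
    then show "count ?K (edge p q) \<le> 1" by (simp add: complete_edges_def count_mset_set')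
  qed
  moreover have "degree ?K v = k v" if v: "v \<in> V" for v
  proof -
    have "neighbours ?K v = V - {v}" using v adj unfolding neighbours_def by auto
    moreover have "edge v v \<notin># complete_edges V"
      using mem_complete_edges[OF fin] by (auto simp: edge_eq_iff)
    ultimately show ?thesis using degree_eq_card_neighbours[OF ml, of v] count_loops[OF fin v]
        full v fin by (simp add: not_in_iff)
  qed
  ultimately show ?thesis unfolding multiloop_graphs_def by blast
qed

text \<open>In a graph containing every non-loop edge once, each new non-loop edge of a swap must be
  one of the two removed edges, which forces the swap to be trivial.\<close>

lemma double_edge_swap_complete:
  assumes ml: "multiloop_graph V E"
    and complete: "\<And>p q. p \<in> V \<Longrightarrow> q \<in> V \<Longrightarrow> p \<noteq> q \<Longrightarrow> edge p q \<in># E"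
    and ml': "multiloop_graph V E'" and ds: "double_edge_swap E E'"
  shows "E' = E"
proof -
  obtain u v x y where sub: "{#edge u v, edge x y#} \<subseteq># E" and E': "E' = swap_edges E u v x y"
    using ds by (rule double_edge_swapE)
  have g: "is_graph_on V E" using ml unfolding multiloop_graph_def by simp
  have inE: "edge u v \<in># E" "edge x y \<in># E" using mset_subset_eqD[OF sub] by auto
  have V: "u \<in> V" "v \<in> V" "x \<in> V" "y \<in> V"
    using is_graph_on_edgeD[OF g inE(1)] is_graph_on_edgeD[OF g inE(2)] by auto
  have old: "edge p q = edge u v \<or> edge p q = edge x y"
    if pq: "p \<in> V" "q \<in> V" "p \<noteq> q" and new: "edge p q = edge u x \<or> edge p q = edge v y" for p q
  proof -
    have "count E' (edge p q) \<le> 1" using ml' pq unfolding multiloop_graph_def by blast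
    moreover have "count E (edge p q) \<ge> 1" using complete[OF pq] by (simp add: Suc_le_eq)
    moreover have "count {#edge u x, edge v y#} (edge p q) \<ge> 1" using new by auto
    ultimately have "count {#edge u v, edge x y#} (edge p q) \<ge> 1"
      using count_swap_edges[OF sub, of "edge p q"] unfolding E' by linarith
    then show ?thesis by (auto split: if_splits)
  qed
  have "{#edge u v, edge x y#} = {#edge u x, edge v y#}"
  proof (cases "u = x")
    case ux: True
    show ?thesis
    proof (cases "v = y")
      case True
      have "u = v"
      proof (rule ccontr)
        assume "u \<noteq> v"
        then have "count E (edge u v) \<le> 1" using ml unfolding multiloop_graph_def by blast
        then show False using mset_subset_eq_count[OF sub, of "edge u v"] ux True by simp
      qed
      then show ?thesis using ux True by simp
    next
      case False
      then have "y = u \<or> v = u" using old[OF V(2,4) False] ux by (auto simp: edge_eq_iff)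
      then show ?thesis using ux by (auto simp: edge_commute[of v x] add_mset_commute)
    qed
  next
    case False
    then have "x = v \<or> y = u" using old[OF V(1,3) False] by (auto simp: edge_eq_iff)
    then show ?thesis
      by (auto simp: edge_commute[of x u] edge_commute[of v u] add_mset_commute)
  qed
  then show ?thesis unfolding E' swap_edges_def using sub by (metis subset_mset.diff_add)
qed

lemma Gll_connected_imp_odd_degree:
  assumes fin: "finite V" and conn: "Gll_connected V k"
    and two: "\<exists>E1 \<in> multiloop_graphs V k. \<exists>E2 \<in> multiloop_graphs V k. E1 \<noteq> E2"
  shows "\<exists>u\<in>V. odd (k u)"
proof (rule ccontr)
  assume "\<not> ?thesis"
  then have Z: "loops V (\<lambda>u. k u div 2) \<in> multiloop_graphs V k"
    by (intro loops_in_multiloop_graphs[OF fin]) auto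
  have "\<forall>e \<in># loops V (\<lambda>u. k u div 2). is_loop e" using mem_loops[OF fin] by fastforce
  then have "Y = loops V (\<lambda>u. k u div 2)"
    if "Y \<in> multiloop_graphs V k" "double_edge_swap (loops V (\<lambda>u. k u div 2)) Y" for Y
    using double_edge_swap_loops[OF _ multiloop_graphsD(1)[OF that(1)] that(2)] by blast
  then show False using not_Gll_connected_if_isolated[OF Z _ two] conn by blast
qed

lemma Gll_connected_imp_not_complete:
  assumes fin: "finite V" and conn: "Gll_connected V k"
    and two: "\<exists>E1 \<in> multiloop_graphs V k. \<exists>E2 \<in> multiloop_graphs V k. E1 \<noteq> E2"
  shows "\<exists>v\<in>V. k v < card V - 1 \<or> odd (k v - (card V - 1))"
proof (rule ccontr)
  assume "\<not> ?thesis"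
  then have Z: "complete_edges V + loops V (\<lambda>u. (k u - (card V - 1)) div 2) \<in> multiloop_graphs V k"
    by (intro complete_in_multiloop_graphs[OF fin]) auto
  have complete: "edge p q \<in># complete_edges V + loops V (\<lambda>u. (k u - (card V - 1)) div 2)"
    if "p \<in> V" "q \<in> V" "p \<noteq> q" for p q
    using that mem_complete_edges[OF fin] by auto
  have "Y = complete_edges V + loops V (\<lambda>u. (k u - (card V - 1)) div 2)"
    if "Y \<in> multiloop_graphs V k"
      "double_edge_swap (complete_edges V + loops V (\<lambda>u. (k u - (card V - 1)) div 2)) Y" for Y
    by (rule double_edge_swap_complete[OF multiloop_graphsD(1)[OF Z] complete
          multiloop_graphsD(1)[OF that(1)] that(2)])
  then show False using not_Gll_connected_if_isolated[OF Z _ two] conn by blast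
qed

lemma Gll_connectedI:
  assumes fin: "finite V" and k1: "\<forall>u\<in>V. k u \<ge> 1" and odd: "\<exists>u\<in>V. odd (k u)"
    and not_complete: "\<exists>v\<in>V. k v < card V - 1 \<or> odd (k v - (card V - 1))"
  shows "Gll_connected V k"
  unfolding Gll_connected_def
proof (intro ballI)
  fix E E' assume E: "E \<in> multiloop_graphs V k" and E': "E' \<in> multiloop_graphs V k"
  obtain M where M: "M \<in> multiloop_graphs V k" "(Gll_adj V k)\<^sup>*\<^sup>* E M" "matching M"
    using reaches_matching[OF assms E] by blast
  obtain M' where M': "M' \<in> multiloop_graphs V k" "(Gll_adj V k)\<^sup>*\<^sup>* E' M'" "matching M'"
    using reaches_matching[OF assms E'] by blast
  have "(Gll_adj V k)\<^sup>*\<^sup>* M M'" using matchings_connected[OF fin M'(1,3) M(1,3)] .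
  moreover have "(Gll_adj V k)\<^sup>*\<^sup>* M' E'"
    using sympD[OF symp_rtranclp[OF symp_Gll_adj] M'(2)] .
  ultimately show "(Gll_adj V k)\<^sup>*\<^sup>* E E'" using M(2) by (meson rtranclp_trans)
qed

lemma not_complete_degree_iff:
  assumes "1 \<le> n"
  shows "(int a - (int n - 1) < 0 \<or> odd (int a - (int n - 1))) \<longleftrightarrow> (a < n - 1 \<or> odd (a - (n - 1)))"
proof (cases "a < n - 1")
  case True
  then have "int a - (int n - 1) < 0" using assms by linarith
  then show ?thesis using True by blast
next
  case False
  then have "int a - (int n - 1) = int (a - (n - 1))" using assms by simp
  then show ?thesis using False by (simp add: even_of_nat)
qed

theorem theorem2:
  fixes V :: "'a set" and k :: "'a \<Rightarrow> nat" and n :: nat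
  assumes "finite V" and "card V = n"
    and "\<forall>u \<in> V. k u \<ge> 1"
    and "\<exists>E1 \<in> multiloop_graphs V k. \<exists>E2 \<in> multiloop_graphs V k. E1 \<noteq> E2"
  shows "Gll_connected V k \<longleftrightarrow>
    ((\<exists>u \<in> V. odd (k u)) \<and>
     (\<exists>v \<in> V. int (k v) - (int n - 1) < 0 \<or> odd (int (k v) - (int n - 1))))"
proof -
  have "(\<exists>v \<in> V. int (k v) - (int n - 1) < 0 \<or> odd (int (k v) - (int n - 1)))
      \<longleftrightarrow> (\<exists>v\<in>V. k v < card V - 1 \<or> odd (k v - (card V - 1)))"
  proof (cases "V = {}")
    case False
    then have "card V > 0" using assms(1) by (simp add: card_gt_0_iff)
    then have "1 \<le> n" using assms(2) by simp
    then show ?thesis unfolding assms(2) by (intro bex_cong refl not_complete_degree_iff)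
  qed simp
  moreover have "Gll_connected V k \<longleftrightarrow> (\<exists>u\<in>V. odd (k u))
      \<and> (\<exists>v\<in>V. k v < card V - 1 \<or> odd (k v - (card V - 1)))"
    using Gll_connected_imp_odd_degree[OF assms(1) _ assms(4)]
      Gll_connected_imp_not_complete[OF assms(1) _ assms(4)] Gll_connectedI[OF assms(1,3)]
    by blast
  ultimately show ?thesis by (simp only:)
qed

end
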